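(* For every finite digraph $G$ we have $G\le P_1$; i.e. $P_1$ is the greatest element of $\mathfrak P_{\mathrm{Digraphs}}$. Moreover $P_1 \le C_1$ and $C_1\le P_1$.
   Context: A digraph is a pair $(V,E)$ with $E\subseteq V^2$. A homomorphism maps edges to edges; homomorphic equivalence means homomorphisms in both directions. A primitive positive formula is $\exists y_1,\dots,y_n(\psi_1\wedge\dots\wedge\psi_m)$ where each $\psi_i$ is $\bot$, $z_1=z_2$, or $E(z_1,z_2)$. For $H=(V,E)$, a pp power of dimension $d$ is the digraph on $V^d$ with edges $\{(u,v): \phi(u,v)\text{ holds in }H\}$ for a pp formula $\phi(x_1,\dots,x_d,y_1,\dots,y_d)$. $H\le G$ means $G$ is homomorphically equivalent to a pp power of $H$; $\mathfrak P_{\mathrm{Digraphs}}$ is the poset of finite digraphs modulo mutual $\le$. $P_1$ is the digraph with one vertex and no edges; $C_1$ is the digraph with one vertex and a loop. *)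

theory Defs
  imports Main
begin

type_synonym 'a digraph = "'a set \<times> ('a \<times> 'a) set"

definition verts :: "'a digraph \<Rightarrow> 'a set" where "verts G = fst G"
definition edges :: "'a digraph \<Rightarrow> ('a \<times> 'a) set" where "edges G = snd G"

definition fin_digraph :: "'a digraph \<Rightarrow> bool" where
  "fin_digraph G \<longleftrightarrow> finite (verts G) \<and> verts G \<noteq> {} \<and> edges G \<subseteq> verts G \<times> verts G"

definition hom :: "'a digraph \<Rightarrow> 'b digraph \<Rightarrow> ('a \<Rightarrow> 'b) \<Rightarrow> bool" where
  "hom G H f \<longleftrightarrow> (\<forall>x\<in>verts G. f x \<in> verts H) \<and>
     (\<forall>x y. (x, y) \<in> edges G \<longrightarrow> (f x, f y) \<in> edges H)"

definition hom_equiv :: "'a digraph \<Rightarrow> 'b digraph \<Rightarrow> bool" where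
  "hom_equiv G H \<longleftrightarrow> (\<exists>f. hom G H f) \<and> (\<exists>g. hom H G g)"

text \<open>Variables of a pp formula phi(x_1..x_d, y_1..y_d): free variables X i, Y i
  (i < d) and existentially quantified variables Z i.\<close>
datatype var = X nat | Y nat | Z nat

datatype atom = Bot | Eq var var | Ed var var

type_synonym pp_formula = "atom list"

fun atom_vars :: "atom \<Rightarrow> var set" where
  "atom_vars Bot = {}"
| "atom_vars (Eq a b) = {a, b}"
| "atom_vars (Ed a b) = {a, b}"

definition wf_pp :: "nat \<Rightarrow> pp_formula \<Rightarrow> bool" where
  "wf_pp d phi \<longleftrightarrow> (\<forall>at\<in>set phi. \<forall>v\<in>atom_vars at.
      (\<forall>i. v = X i \<longrightarrow> i < d) \<and> (\<forall>i. v = Y i \<longrightarrow> i < d))"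

fun eval_var :: "'a list \<Rightarrow> 'a list \<Rightarrow> (nat \<Rightarrow> 'a) \<Rightarrow> var \<Rightarrow> 'a" where
  "eval_var u v z (X i) = u ! i"
| "eval_var u v z (Y i) = v ! i"
| "eval_var u v z (Z i) = z i"


fun holds_atom :: "'a digraph \<Rightarrow> (var \<Rightarrow> 'a) \<Rightarrow> atom \<Rightarrow> bool" where
  "holds_atom G s Bot = False"
| "holds_atom G s (Eq a b) = (s a = s b)"
| "holds_atom G s (Ed a b) = ((s a, s b) \<in> edges G)"

definition pp_holds :: "'a digraph \<Rightarrow> pp_formula \<Rightarrow> 'a list \<Rightarrow> 'a list \<Rightarrow> bool" where
  "pp_holds G phi u v \<longleftrightarrow> (\<exists>z. (\<forall>i. z i \<in> verts G) \<and>
      (\<forall>at\<in>set phi. holds_atom G (eval_var u v z) at))"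

definition pp_power :: "'a digraph \<Rightarrow> nat \<Rightarrow> pp_formula \<Rightarrow> 'a list digraph" where
  "pp_power H d phi =
     ({u. length u = d \<and> set u \<subseteq> verts H},
      {(u, v). length u = d \<and> set u \<subseteq> verts H \<and> length v = d \<and> set v \<subseteq> verts H
               \<and> pp_holds H phi u v})"

definition pp_le :: "'a digraph \<Rightarrow> 'b digraph \<Rightarrow> bool" where
  "pp_le H G \<longleftrightarrow> (\<exists>d \<ge> 1. \<exists>phi. wf_pp d phi \<and> hom_equiv G (pp_power H d phi))"

definition P1 :: "unit digraph" where "P1 = ({()}, {})"
definition C1 :: "unit digraph" where "C1 = ({()}, {((), ())})"

end

theory Submission
  imports Defs
begin

text \<open>The pp formula consisting of the single atom \<open>\<bottom>\<close> defines a power with no edges,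
  the empty conjunction one in which every pair of tuples is an edge. For any digraph
  with a vertex, the first is homomorphically equivalent to \<open>P\<^sub>1\<close> and the second, which
  has loops, to \<open>C\<^sub>1\<close>.\<close>

lemma hom_equiv_P1_iff: "hom_equiv P1 G \<longleftrightarrow> verts G \<noteq> {} \<and> edges G = {}"
  unfolding hom_equiv_def hom_def P1_def verts_def edges_def by auto

lemma hom_equiv_C1_iff: "hom_equiv C1 G \<longleftrightarrow> (\<exists>x\<in>verts G. (x, x) \<in> edges G)"
  unfolding hom_equiv_def hom_def C1_def verts_def edges_def by auto

lemma edges_pp_power_Bot: "edges (pp_power H d [Bot]) = {}"
  by (simp add: pp_power_def edges_def pp_holds_def)

lemma pp_holds_Nil: "pp_holds H [] u v \<longleftrightarrow> verts H \<noteq> {}"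
  by (auto simp: pp_holds_def)

lemma singleton_in_verts_pp_power:
  assumes "x \<in> verts H"
  shows "[x] \<in> verts (pp_power H 1 phi)"
  using assms by (simp add: pp_power_def verts_def)

lemma pp_le_P1:
  assumes "x \<in> verts H"
  shows "pp_le H P1"
proof -
  have "hom_equiv P1 (pp_power H 1 [Bot])"
    using singleton_in_verts_pp_power[OF assms]
    by (auto simp: hom_equiv_P1_iff edges_pp_power_Bot)
  moreover have "wf_pp 1 [Bot]"
    by (simp add: wf_pp_def)
  ultimately show ?thesis
    unfolding pp_le_def by blast
qed

lemma pp_le_C1:
  assumes "x \<in> verts H"
  shows "pp_le H C1"
proof -
  have "([x], [x]) \<in> edges (pp_power H 1 [])"
    using assms by (auto simp: pp_power_def edges_def pp_holds_Nil)
  then have "hom_equiv C1 (pp_power H 1 [])"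
    using singleton_in_verts_pp_power[OF assms] by (auto simp: hom_equiv_C1_iff)
  moreover have "wf_pp 1 []"
    by (simp add: wf_pp_def)
  ultimately show ?thesis
    unfolding pp_le_def by blast
qed

theorem mainTheorem2:
  shows "(\<forall>G :: 'a digraph. fin_digraph G \<longrightarrow> pp_le G P1) \<and> pp_le P1 C1 \<and> pp_le C1 P1"
proof (intro conjI allI impI)
  fix G :: "'a digraph"
  assume "fin_digraph G"
  then obtain x where "x \<in> verts G" by (auto simp: fin_digraph_def)
  then show "pp_le G P1" by (rule pp_le_P1)
next
  show "pp_le P1 C1" by (rule pp_le_C1[of "()"]) (simp add: P1_def verts_def)
next
  show "pp_le C1 P1" by (rule pp_le_P1[of "()"]) (simp add: C1_def verts_def)
qed

end
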